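(* Let $\mathbb{F}$ be a finite field with $q=p^k\geq 4$ elements ($p$ prime), and let $\Gamma$ be a connected finite graph with vertex set $V$ and edge set $E$, each edge $e$ being oriented with initial vertex $e(0)$ and terminal vertex $e(1)$. Assume $|V|\leq |E|$. Then $\Gamma$ is $\mathbb{F}$-colorable if and only if $A_\Gamma\in \mathbf{C}$, i.e. if and only if there exists a map $\alpha:E\to \mathbb{F}\setminus\{0,-1\}$ such that the $|V|\times|E|$ matrix $\pi_\alpha(A_\Gamma)=[A_\Gamma(v,e,\alpha(e))]_{v\in V,e\in E}$ has rank less than $\min(|E|,|V|)$.
   Context: An $\mathbb{F}$-coloring of $\Gamma$ is a map $V\to\mathbb{F}^{*}=\mathbb{F}\setminus\{0\}$ such that no two adjacent vertices receive the same value; $\Gamma$ is $\mathbb{F}$-colorable if it has one. The array $A_\Gamma\in\mathbb{F}^{|V|\cdot|E|\cdot(q-1)}$ is indexed by $(v,e,c)$ with $v\in V$, $e\in E$, $c\in\mathbb{F}\setminus\{0\}$, and defined by $A_\Gamma(v,e,c)=1$ if $v=e(0)$, $A_\Gamma(v,e,c)=c$ if $v=e(1)$, and $A_\Gamma(v,e,c)=0$ otherwise. For $\alpha:E\to\mathbb{F}\setminus\{0,-1\}$, $\pi_\alpha$ sends an array $A$ indexed by $(v,e,c)$ to the $|V|\times|E|$ matrix $[A(v,e,\alpha(e))]_{v,e}$. Let $\mathbf{D}$ be the determinantal variety of $|V|\times|E|$ matrices of rank $<\min(|E|,|V|)$, $\mathbf{D}_\alpha=\pi_\alpha^{*}\mathbf{D}$,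 and the coloring variety $\mathbf{C}=\bigcup_\alpha \mathbf{D}_\alpha\subset\mathbb{A}^{|V||E|(q-1)}$, the union over all $\alpha:E\to\mathbb{F}\setminus\{0,-1\}$. *)

theory Defs
  imports "Jordan_Normal_Form.DL_Rank"
begin

(* A finite (multi)graph with vertex set V = {0..<nV} and edge set E = {0..<nE};
   edge e is oriented from src e = e(0) to tgt e = e(1). *)

definition graph_ok :: "nat \<Rightarrow> nat \<Rightarrow> (nat \<Rightarrow> nat) \<Rightarrow> (nat \<Rightarrow> nat) \<Rightarrow> bool" where
  "graph_ok nV nE src tgt \<longleftrightarrow> (\<forall>e<nE. src e < nV \<and> tgt e < nV)"

definition adjacent :: "nat \<Rightarrow> (nat \<Rightarrow> nat) \<Rightarrow> (nat \<Rightarrow> nat) \<Rightarrow> nat \<Rightarrow> nat \<Rightarrow> bool" where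
  "adjacent nE src tgt u v \<longleftrightarrow>
     (\<exists>e<nE. (src e = u \<and> tgt e = v) \<or> (src e = v \<and> tgt e = u))"

definition graph_connected :: "nat \<Rightarrow> nat \<Rightarrow> (nat \<Rightarrow> nat) \<Rightarrow> (nat \<Rightarrow> nat) \<Rightarrow> bool" where
  "graph_connected nV nE src tgt \<longleftrightarrow>
     0 < nV \<and> (\<forall>u<nV. \<forall>v<nV. (adjacent nE src tgt)\<^sup>*\<^sup>* u v)"

definition F_colorable :: "'a::field itself \<Rightarrow> nat \<Rightarrow> nat \<Rightarrow> (nat \<Rightarrow> nat) \<Rightarrow> (nat \<Rightarrow> nat) \<Rightarrow> bool" where
  "F_colorable _ nV nE src tgt \<longleftrightarrow>
     (\<exists>col :: nat \<Rightarrow> 'a. (\<forall>v<nV. col v \<noteq> 0) \<and>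
        (\<forall>u<nV. \<forall>v<nV. adjacent nE src tgt u v \<longrightarrow> col u \<noteq> col v))"

definition A_Gamma :: "(nat \<Rightarrow> nat) \<Rightarrow> (nat \<Rightarrow> nat) \<Rightarrow> nat \<Rightarrow> nat \<Rightarrow> 'a::field \<Rightarrow> 'a" where
  "A_Gamma src tgt v e c = (if v = src e then 1 else if v = tgt e then c else 0)"

definition pi_alpha :: "nat \<Rightarrow> nat \<Rightarrow> (nat \<Rightarrow> 'a) \<Rightarrow> (nat \<Rightarrow> nat \<Rightarrow> 'a \<Rightarrow> 'a) \<Rightarrow> 'a mat" where
  "pi_alpha nV nE \<alpha> A = mat nV nE (\<lambda>(v, e). A v e (\<alpha> e))"

end

theory Submission
  imports Defs
begin

(* For fixed alpha, the rank of pi_alpha(A_Gamma) is below |V| exactly when a nonzero y in F^V is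
   orthogonal to every column, i.e. y(e(0)) + alpha(e) y(e(1)) = 0 on each edge e (loops force
   y(e(0)) = 0). As alpha(e) <> 0, the zero set of such a y is closed under adjacency, so by
   connectedness y vanishes nowhere; and alpha(e) <> -1 then forces y(e(0)) <> y(e(1)), so y is an
   F-coloring. Conversely a coloring c gives such a y = c for alpha(e) = -c(e(0)) / c(e(1)). *)

lemma (in vectorspace) maximal_lin_indpt_subset_spans:
  assumes T: "T \<subseteq> carrier V" and S: "maximal S (\<lambda>U. U \<subseteq> T \<and> lin_indpt U)"
  shows "T \<subseteq> span S"
proof
  fix t assume t: "t \<in> T"
  have ST: "S \<subseteq> T" and li: "lin_indpt S" using S unfolding maximal_def by auto
  show "t \<in> span S"
  proof (rule ccontr)
    assume nt: "t \<notin> span S"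
    then have "t \<notin> S" using in_own_span ST T by blast
    moreover have "lin_indpt (S \<union> {t})"
      using lin_dep_iff_in_span[of S t] ST T t li nt \<open>t \<notin> S\<close> by auto
    ultimately show False
      using S t ST unfolding maximal_def by blast
  qed
qed

lemma (in vec_space) maximal_lin_indpt_cols_exists:
  obtains S where "maximal S (\<lambda>T. T \<subseteq> set (cols A) \<and> lin_indpt T)"
proof -
  have "lin_indpt {}"
    by (simp add: finite_lin_indpt2)
  then show ?thesis
    using maximal_exists_superset[of "set (cols A)" "\<lambda>T. T \<subseteq> set (cols A) \<and> lin_indpt T" "{}"] that
    by auto
qed

lemma (in vec_space) nonzero_orthogonal_vector_exists:
  fixes S :: "'a vec set"
  assumes S: "finite S" "S \<subseteq> carrier_vec n" and card: "card S < n"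
  obtains y where "y \<in> carrier_vec n" "y \<noteq> 0\<^sub>v n" "\<forall>s\<in>S. y \<bullet> s = 0"
proof -
  obtain ss where ss: "set ss = S" "length ss = card S"
    using S(1) by (metis distinct_card finite_distinct_list)
  (* Padding the vectors of S with zero rows gives a singular square matrix; a nonzero vector
     in its kernel is orthogonal to S. *)
  define rs where "rs = ss @ replicate (n - card S) (0\<^sub>v n)"
  define B where "B = mat_of_rows n rs"
  have rs: "set rs \<subseteq> carrier_vec n" "length rs = n"
    using ss S(2) card unfolding rs_def by auto
  have B: "B \<in> carrier_mat n n"
    using rs unfolding B_def by (metis mat_of_rows_carrier(1))
  have "0\<^sub>v n \<in> set (rows B)"
    using card rs unfolding B_def rs_def by simp
  then have "lin_dep (set (rows B))"
    by (intro zero_lin_dep) (auto, metis UNIV_I singletonD zero_neq_one)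
  then have "det B = 0"
    by (rule lin_dep_rows_imp_det_0[OF B])
  then obtain y where y: "y \<in> carrier_vec n" "y \<noteq> 0\<^sub>v n" "B *\<^sub>v y = 0\<^sub>v n"
    unfolding det_0_iff_vec_prod_zero_field[OF B] by auto
  have "\<forall>s\<in>S. y \<bullet> s = 0"
  proof
    fix s assume s: "s \<in> S"
    obtain k where k: "k < length ss" "ss ! k = s"
      using s unfolding ss(1)[symmetric] in_set_conv_nth by blast
    have "k < length rs"
      using k rs ss card by simp
    then have "row B k = rs ! k"
      unfolding B_def using rs(1) nth_mem by (intro mat_of_rows_row) auto
    also have "\<dots> = s"
      using k unfolding rs_def by (simp add: nth_append)
    finally have "s \<bullet> y = (B *\<^sub>v y) $ k"
      using k ss card B by simp
    also have "\<dots> = 0"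
      using y(3) k ss card by simp
    finally show "y \<bullet> s = 0"
      using comm_scalar_prod[OF _ y(1), of s] S(2) s by auto
  qed
  then show ?thesis
    by (rule that[OF y(1,2)])
qed

lemma (in vec_space) rank_less_iff_left_kernel:
  assumes A: "A \<in> carrier_mat n m"
  shows "rank A < n \<longleftrightarrow> (\<exists>y\<in>carrier_vec n. y \<noteq> 0\<^sub>v n \<and> (\<forall>j<m. y \<bullet> col A j = 0))"
proof -
  obtain S where S: "maximal S (\<lambda>T. T \<subseteq> set (cols A) \<and> lin_indpt T)"
    by (rule maximal_lin_indpt_cols_exists)
  have cols: "set (cols A) \<subseteq> carrier_vec n"
    using A cols_dim by blast
  have SA: "S \<subseteq> set (cols A)" and li: "lin_indpt S"
    using S unfolding maximal_def by auto
  have SC: "S \<subseteq> carrier_vec n" and fin: "finite S"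
    using SA cols finite_subset by auto
  have rank: "rank A = card S"
    by (rule rank_card_indpt[OF A S])
  have "orthogonal_complement (set (cols A)) \<subseteq> orthogonal_complement S"
    using SA by (rule orthogonal_complement_subset)
  moreover have "orthogonal_complement S \<subseteq> orthogonal_complement (set (cols A))"
    using in_orthogonal_complement_span[OF SC] orthogonal_complement_subset
      maximal_lin_indpt_subset_spans[OF cols S] by metis
  moreover have "orthogonal_complement (set (cols A)) =
      {y \<in> carrier_vec n. \<forall>j<m. y \<bullet> col A j = 0}"
    using A unfolding orthogonal_complement_def by (auto simp: cols_def)
  ultimately have perp: "{y \<in> carrier_vec n. \<forall>j<m. y \<bullet> col A j = 0} = orthogonal_complement S"
    by blast
  show ?thesis
  proof
    assume "rank A < n"
    then obtain y where "y \<in> carrier_vec n" "y \<noteq> 0\<^sub>v n" "\<forall>s\<in>S. y \<bullet> s = 0"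
      using nonzero_orthogonal_vector_exists[OF fin SC] rank by auto
    then show "\<exists>y\<in>carrier_vec n. y \<noteq> 0\<^sub>v n \<and> (\<forall>j<m. y \<bullet> col A j = 0)"
      using perp unfolding orthogonal_complement_def by blast
  next
    assume "\<exists>y\<in>carrier_vec n. y \<noteq> 0\<^sub>v n \<and> (\<forall>j<m. y \<bullet> col A j = 0)"
    then obtain y where y: "y \<in> orthogonal_complement S" "y \<noteq> 0\<^sub>v n"
      using perp by blast
    show "rank A < n"
    proof (rule ccontr)
      assume "\<not> rank A < n"
      then have "basis S"
        using dim_li_is_basis[OF fin_dim fin SC li] rank dim_is_n by simp
      then have "span S = carrier_vec n"
        unfolding basis_def by simp
      then have "y \<in> orthogonal_complement (carrier_vec n)"
        using y(1) in_orthogonal_complement_span[OF SC] by simp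
      have "y $ i = 0" if "i < n" for i
      proof -
        have "y \<bullet> unit_vec n i = 0"
          using \<open>y \<in> orthogonal_complement (carrier_vec n)\<close>
          unfolding orthogonal_complement_def by simp
        then show ?thesis
          using that by simp
      qed
      then show False
        using y unfolding orthogonal_complement_def by auto
    qed
  qed
qed

lemma scalar_prod_col_pi_alpha_A_Gamma:
  fixes \<alpha> :: "nat \<Rightarrow> 'a::field"
  assumes e: "e < nE" and ends: "src e < nV" "tgt e < nV" and y: "y \<in> carrier_vec nV"
  shows "y \<bullet> col (pi_alpha nV nE \<alpha> (A_Gamma src tgt)) e =
    (if src e = tgt e then y $ src e else y $ src e + \<alpha> e * y $ tgt e)"
proof -
  have "y \<bullet> col (pi_alpha nV nE \<alpha> (A_Gamma src tgt)) e =
      (\<Sum>v<nV. y $ v * A_Gamma src tgt v e (\<alpha> e))"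
    using e y unfolding pi_alpha_def scalar_prod_def by (simp add: lessThan_atLeast0)
  also have "\<dots> = (\<Sum>v<nV. (if v = src e then y $ src e else 0) +
      (if v = tgt e \<and> src e \<noteq> tgt e then \<alpha> e * y $ tgt e else 0))"
    by (rule sum.cong) (auto simp: A_Gamma_def)
  also have "\<dots> = (if src e = tgt e then y $ src e else y $ src e + \<alpha> e * y $ tgt e)"
    using ends by (simp add: sum.distrib)
  finally show ?thesis .
qed

lemma graph_connected_propagate:
  assumes "graph_connected nV nE src tgt"
    and "\<And>e. e < nE \<Longrightarrow> P (src e) \<longleftrightarrow> P (tgt e)"
    and "u < nV" "P u" "v < nV"
  shows "P v"
proof -
  have "(adjacent nE src tgt)\<^sup>*\<^sup>* u v"
    using assms(1,3,5) unfolding graph_connected_def by blast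
  then show ?thesis
    by (induction rule: rtranclp_induct) (use assms(2,4) in \<open>auto simp: adjacent_def\<close>)
qed

lemma F_colorable_imp_left_kernel:
  fixes src tgt :: "nat \<Rightarrow> nat"
  assumes ok: "graph_ok nV nE src tgt" and nonempty: "0 < nV"
    and colorable: "F_colorable TYPE('a::field) nV nE src tgt"
  obtains \<alpha> :: "nat \<Rightarrow> 'a::field" and y where "\<forall>e<nE. \<alpha> e \<noteq> 0 \<and> \<alpha> e \<noteq> -1"
    and "y \<in> carrier_vec nV" "y \<noteq> 0\<^sub>v nV"
    and "\<forall>e<nE. y \<bullet> col (pi_alpha nV nE \<alpha> (A_Gamma src tgt)) e = 0"
proof -
  obtain c :: "nat \<Rightarrow> 'a" where c0: "\<And>v. v < nV \<Longrightarrow> c v \<noteq> 0"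
    and c_adj: "\<And>u v. u < nV \<Longrightarrow> v < nV \<Longrightarrow> adjacent nE src tgt u v \<Longrightarrow> c u \<noteq> c v"
    using colorable unfolding F_colorable_def by blast
  have ends: "src e < nV" "tgt e < nV" if "e < nE" for e
    using ok that unfolding graph_ok_def by auto
  have c_edge: "c (src e) \<noteq> c (tgt e)" if "e < nE" for e
    using c_adj ends[OF that] that unfolding adjacent_def by blast
  define \<alpha> where "\<alpha> e = - c (src e) / c (tgt e)" for e
  define y where "y = vec nV c"
  have "\<alpha> e \<noteq> 0 \<and> \<alpha> e \<noteq> -1" if "e < nE" for e
    using c0[OF ends(1)[OF that]] c0[OF ends(2)[OF that]] c_edge[OF that]
    unfolding \<alpha>_def by (auto simp: field_simps)
  moreover have "y \<in> carrier_vec nV"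
    unfolding y_def by simp
  moreover have "y \<noteq> 0\<^sub>v nV"
    using nonempty c0 unfolding y_def by (metis index_vec index_zero_vec(1))
  moreover have "y \<bullet> col (pi_alpha nV nE \<alpha> (A_Gamma src tgt)) e = 0" if "e < nE" for e
    using scalar_prod_col_pi_alpha_A_Gamma[where src = src and tgt = tgt and \<alpha> = \<alpha>,
        OF that ends[OF that] \<open>y \<in> carrier_vec nV\<close>]
      c0[OF ends(2)[OF that]] c_edge[OF that] ends[OF that]
    unfolding y_def \<alpha>_def by auto
  ultimately show ?thesis
    using that by blast
qed

lemma left_kernel_imp_F_colorable:
  fixes \<alpha> :: "nat \<Rightarrow> 'a::field"
  assumes ok: "graph_ok nV nE src tgt" and connected: "graph_connected nV nE src tgt"
    and \<alpha>: "\<forall>e<nE. \<alpha> e \<noteq> 0 \<and> \<alpha> e \<noteq> -1"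
    and y: "y \<in> carrier_vec nV" "y \<noteq> 0\<^sub>v nV"
    and kernel: "\<forall>e<nE. y \<bullet> col (pi_alpha nV nE \<alpha> (A_Gamma src tgt)) e = 0"
  shows "F_colorable TYPE('a) nV nE src tgt"
proof -
  have ends: "src e < nV" "tgt e < nV" if "e < nE" for e
    using ok that unfolding graph_ok_def by auto
  have edge: "(if src e = tgt e then y $ src e else y $ src e + \<alpha> e * y $ tgt e) = 0"
    if "e < nE" for e
    using kernel that scalar_prod_col_pi_alpha_A_Gamma[where src = src and tgt = tgt and \<alpha> = \<alpha>,
        OF that ends[OF that] y(1)]
    by simp
  have zero_iff: "y $ src e = 0 \<longleftrightarrow> y $ tgt e = 0" if "e < nE" for e
    using edge[OF that] \<alpha> that by (cases "src e = tgt e") (auto simp: add_eq_0_iff)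
  obtain i where i: "i < nV" "y $ i \<noteq> 0"
    using y by (metis eq_vecI carrier_vecD index_zero_vec)
  have nonzero: "y $ v \<noteq> 0" if "v < nV" for v
    using graph_connected_propagate[where P = "\<lambda>v. y $ v \<noteq> 0", OF connected _ i] zero_iff that
    by blast
  have distinct: "y $ src e \<noteq> y $ tgt e" if "e < nE" for e
  proof
    assume same: "y $ src e = y $ tgt e"
    have "src e \<noteq> tgt e"
      using edge[OF that] nonzero ends[OF that] by auto
    then have "(1 + \<alpha> e) * y $ tgt e = 0"
      using edge[OF that] same by (simp add: algebra_simps)
    then show False
      using nonzero[OF ends(2)[OF that]] \<alpha> that by (simp add: add_eq_0_iff)
  qed
  show ?thesis
    unfolding F_colorable_def adjacent_def
    using nonzero distinct by (intro exI[of _ "\<lambda>v. y $ v"]) metis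
qed

theorem mainTheorem1:
  fixes nV nE :: nat and src tgt :: "nat \<Rightarrow> nat"
  assumes "card (UNIV :: 'a set) \<ge> 4"
    and "graph_ok nV nE src tgt"
    and "graph_connected nV nE src tgt"
    and "nV \<le> nE"
  shows "F_colorable TYPE('a) nV nE src tgt \<longleftrightarrow>
    (\<exists>\<alpha> :: nat \<Rightarrow> 'a::{finite,field}. (\<forall>e<nE. \<alpha> e \<noteq> 0 \<and> \<alpha> e \<noteq> -1) \<and>
       vec_space.rank nV (pi_alpha nV nE \<alpha> (A_Gamma src tgt)) < min nE nV)"
proof -
  have carrier: "pi_alpha nV nE \<alpha> (A_Gamma src tgt) \<in> carrier_mat nV nE" for \<alpha> :: "nat \<Rightarrow> 'a"
    unfolding pi_alpha_def by simp
  have nonempty: "0 < nV"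
    using assms(3) unfolding graph_connected_def by simp
  have rank_iff: "vec_space.rank nV (pi_alpha nV nE \<alpha> (A_Gamma src tgt)) < min nE nV \<longleftrightarrow>
      (\<exists>y\<in>carrier_vec nV. y \<noteq> 0\<^sub>v nV \<and>
        (\<forall>e<nE. y \<bullet> col (pi_alpha nV nE \<alpha> (A_Gamma src tgt)) e = 0))"
    for \<alpha> :: "nat \<Rightarrow> 'a"
    using vec_space.rank_less_iff_left_kernel[OF carrier] assms(4) by (simp add: min_absorb2)
  show ?thesis
    unfolding rank_iff
    using F_colorable_imp_left_kernel[OF assms(2) nonempty]
      left_kernel_imp_F_colorable[OF assms(2,3)]
    by metis
qed

end
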